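(* Let $\mathcal{A}'\subsetneq\mathcal{A}$ be finite alphabets, $\Omega$ a prefix extension from $\mathcal{A}'$ to $\mathcal{A}$ given by words $\{\omega_{\varepsilon,b}\}_{\varepsilon\in\{0,1\},b\in\mathcal{A}'}$, and $\mathbf{p}=(p_0,p_1)$ an irreducible pair on $\mathcal{A}'$ with $a_\varepsilon=p_\varepsilon^{-1}(1)$. Then $\Omega(\mathbf{p})$ is irreducible if and only if there is no $k>0$ such that the first $k$ letters of $\omega_{0,a_0}$ and the first $k$ letters of $\omega_{1,a_1}$ form the same set.
   Context: A pair on an alphabet $\mathcal{B}$ with $m=\#\mathcal{B}$ is $(q_0,q_1)$ with $q_0,q_1:\mathcal{B}\to\{1,\dots,m\}$ bijections; row $\varepsilon$ is the word $q_\varepsilon^{-1}(1)\cdots q_\varepsilon^{-1}(m)$. It is irreducible if $q_0^{-1}\{1,\dots,k\}\ne q_1^{-1}\{1,\dots,k\}$ for all $1\le k<m$. A word is an ordered collection of distinct letters. A prefix extension from $\mathcal{A}'$ to $\mathcal{A}$ is a choice of words $\omega_{\varepsilon,b}$ ($\varepsilon\in\{0,1\}$, $b\in\mathcal{A}'$) such that: each $\omega_{\varepsilon,b}=u\,b$ with $u$ a possibly empty word in letters of $\mathcal{A}\setminus\mathcal{A}'$; for each $\varepsilon$, every letter of $\mathcal{A}$ appears in some $\omega_{\varepsilon,b}$; and for each $\varepsilon$ and $b\ne c$, $\omega_{\varepsilon,b}$ and $\omega_{\varepsilon,c}$ share no letter. For a pair $\mathbf{p}$ on $\mathcal{A}'$,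 $\Omega(\mathbf{p})$ is the pair on $\mathcal{A}$ whose row $\varepsilon$ is obtained from row $\varepsilon$ of $\mathbf{p}$ by replacing each letter $b$ by the word $\omega_{\varepsilon,b}$. *)

theory Defs
  imports Main
begin

definition is_pair :: "'a set \<Rightarrow> ('a \<Rightarrow> nat) \<Rightarrow> ('a \<Rightarrow> nat) \<Rightarrow> bool" where
  "is_pair B q0 q1 \<longleftrightarrow> finite B \<and> bij_betw q0 B {1..card B} \<and> bij_betw q1 B {1..card B}"

definition irreducible_pair :: "'a set \<Rightarrow> ('a \<Rightarrow> nat) \<Rightarrow> ('a \<Rightarrow> nat) \<Rightarrow> bool" where
  "irreducible_pair B q0 q1 \<longleftrightarrow> is_pair B q0 q1 \<and>
     (\<forall>k. 1 \<le> k \<and> k < card B \<longrightarrow> {b\<in>B. q0 b \<in> {1..k}} \<noteq> {b\<in>B. q1 b \<in> {1..k}})"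

definition row :: "'a set \<Rightarrow> ('a \<Rightarrow> nat) \<Rightarrow> 'a list" where
  "row B q = map (inv_into B q) [1..<Suc (card B)]"

definition word_to_bij :: "'a list \<Rightarrow> 'a \<Rightarrow> nat" where
  "word_to_bij xs = (\<lambda>a. Suc (THE i. i < length xs \<and> xs ! i = a))"

definition prefix_ext_side :: "'a set \<Rightarrow> 'a set \<Rightarrow> ('a \<Rightarrow> 'a list) \<Rightarrow> bool" where
  "prefix_ext_side A A' w \<longleftrightarrow>
     (\<forall>b\<in>A'. distinct (w b) \<and> (\<exists>u. w b = u @ [b] \<and> set u \<subseteq> A - A')) \<and>
     A \<subseteq> (\<Union>b\<in>A'. set (w b)) \<and>
     (\<forall>b\<in>A'. \<forall>c\<in>A'. b \<noteq> c \<longrightarrow> set (w b) \<inter> set (w c) = {})"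

definition prefix_extension :: "'a set \<Rightarrow> 'a set \<Rightarrow> ('a \<Rightarrow> 'a list) \<Rightarrow> ('a \<Rightarrow> 'a list) \<Rightarrow> bool" where
  "prefix_extension A A' w0 w1 \<longleftrightarrow> prefix_ext_side A A' w0 \<and> prefix_ext_side A A' w1"

text \<open>Row epsilon of Omega(p): replace each letter b of row epsilon of p by the word w_epsilon(b).\<close>
definition Omega_side :: "'a set \<Rightarrow> ('a \<Rightarrow> 'a list) \<Rightarrow> ('a \<Rightarrow> nat) \<Rightarrow> 'a \<Rightarrow> nat" where
  "Omega_side A' w q = word_to_bij (concat (map w (row A' q)))"

end

theory Submission
  imports Defs
begin

text \<open>A pair is encoded by its two rows, and irreducibility says that no proper nonempty prefixes of
  equal length of the rows have the same set of letters. In the row of \<open>\<Omega>(p)\<close> the letters of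
  \<open>\<A>'\<close> occur exactly at the ends of the blocks \<open>\<omega>\<^sub>\<epsilon>\<^sub>,\<^sub>b\<close>, so a prefix of length \<open>k\<close> of that row
  meets \<open>\<A>'\<close> in a prefix of the row of \<open>p\<close>. Two prefixes of the new rows with equal sets therefore
  cut the old rows after the same number \<open>j\<close> of letters. Irreducibility of \<open>p\<close> leaves only
  \<open>j = 0\<close>, where both prefixes lie inside the first blocks \<open>\<omega>\<^sub>0\<^sub>,\<^sub>a\<^sub>0\<close> and \<open>\<omega>\<^sub>1\<^sub>,\<^sub>a\<^sub>1\<close>, and \<open>j\<close> maximal,
  which is impossible since the last letter of a row would lie in a proper prefix.\<close>

definition irreducible_words :: "'a list \<Rightarrow> 'a list \<Rightarrow> bool" where
  "irreducible_words xs ys \<longleftrightarrow>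
     (\<forall>k. 0 < k \<and> k < length xs \<longrightarrow> set (take k xs) \<noteq> set (take k ys))"

definition marked_block :: "'a set \<Rightarrow> 'a list \<Rightarrow> 'a \<Rightarrow> bool" where
  "marked_block X w x \<longleftrightarrow> (\<exists>u. w = u @ [x] \<and> set u \<inter> X = {})"

lemma word_to_bij_nth:
  assumes "distinct xs" and "i < length xs"
  shows "word_to_bij xs (xs ! i) = Suc i"
  unfolding word_to_bij_def
  using assms by (auto simp: nth_eq_iff_index_eq)

lemma bij_betw_word_to_bij:
  assumes "distinct xs"
  shows "bij_betw (word_to_bij xs) (set xs) {1..length xs}"
proof (rule bij_betw_imageI)
  show "inj_on (word_to_bij xs) (set xs)"
    using assms by (auto simp: inj_on_def in_set_conv_nth word_to_bij_nth)
  have "m \<in> word_to_bij xs ` set xs" if "m \<in> {1..length xs}" for m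
  proof -
    have "m - 1 < length xs" and "m = Suc (m - 1)" using that by auto
    then show ?thesis by (metis assms image_eqI nth_mem word_to_bij_nth)
  qed
  then show "word_to_bij xs ` set xs = {1..length xs}"
    using assms by (auto simp: in_set_conv_nth word_to_bij_nth)
qed

lemma word_to_bij_initial_segment:
  assumes "distinct xs"
  shows "{a \<in> set xs. word_to_bij xs a \<in> {1..k}} = set (take k xs)"
  using assms by (force simp: in_set_conv_nth word_to_bij_nth)

lemma irreducible_pair_word_to_bij_iff:
  assumes "distinct xs" and "distinct ys" and "set xs = B" and "set ys = B"
  shows "irreducible_pair B (word_to_bij xs) (word_to_bij ys) \<longleftrightarrow> irreducible_words xs ys"
proof -
  have lengths: "card B = length xs" "card B = length ys"
    using assms distinct_card by metis+
  then have "is_pair B (word_to_bij xs) (word_to_bij ys)"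
    unfolding is_pair_def
    using bij_betw_word_to_bij[OF assms(1)] bij_betw_word_to_bij[OF assms(2)] assms(3,4)
    by auto
  moreover have "{b\<in>B. word_to_bij xs b \<in> {1..k}} = set (take k xs)"
    and "{b\<in>B. word_to_bij ys b \<in> {1..k}} = set (take k ys)" for k
    using word_to_bij_initial_segment assms by blast+
  ultimately show ?thesis
    unfolding irreducible_pair_def irreducible_words_def using lengths(1)
    by (simp add: Suc_le_eq)
qed

lemma irreducible_pair_cong:
  assumes "\<And>b. b \<in> B \<Longrightarrow> q0 b = q0' b" and "\<And>b. b \<in> B \<Longrightarrow> q1 b = q1' b"
  shows "irreducible_pair B q0 q1 \<longleftrightarrow> irreducible_pair B q0' q1'"
proof -
  have "bij_betw q0 B S \<longleftrightarrow> bij_betw q0' B S" and "bij_betw q1 B S \<longleftrightarrow> bij_betw q1' B S" for S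
    by (rule bij_betw_cong, simp add: assms)+
  moreover have "{b\<in>B. q0 b \<in> {1..k}} = {b\<in>B. q0' b \<in> {1..k}}"
    and "{b\<in>B. q1 b \<in> {1..k}} = {b\<in>B. q1' b \<in> {1..k}}" for k
    using assms by auto
  ultimately show ?thesis
    unfolding irreducible_pair_def is_pair_def by simp
qed

lemma
  assumes "bij_betw q B {1..card B}"
  shows distinct_row: "distinct (row B q)"
    and set_row: "set (row B q) = B"
proof -
  have "bij_betw (inv_into B q) {1..card B} B"
    using bij_betw_inv_into[OF assms] .
  moreover have "set [1..<Suc (card B)] = {1..card B}" by auto
  ultimately show "distinct (row B q)" and "set (row B q) = B"
    unfolding row_def by (auto simp: distinct_map bij_betw_def simp del: upt_Suc)
qed

lemma word_to_bij_row:
  assumes "bij_betw q B {1..card B}" and "b \<in> B"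
  shows "word_to_bij (row B q) b = q b"
proof -
  have "q b \<in> {1..card B}" using assms by (auto simp: bij_betw_def)
  then have i: "q b - 1 < length (row B q)" and q: "Suc (q b - 1) = q b"
    by (auto simp: row_def)
  have "row B q ! (q b - 1) = b"
    using i q bij_betw_inv_into_left[OF assms] by (simp add: row_def del: upt_Suc)
  with word_to_bij_nth[OF distinct_row[OF assms(1)] i] q show ?thesis by simp
qed

lemma row_eq_Cons:
  assumes "0 < card B"
  shows "row B q = inv_into B q 1 # tl (row B q)"
  using assms by (simp add: row_def upt_conv_Cons del: upt_Suc)

lemma irreducible_pair_iff_rows:
  assumes "is_pair B q0 q1"
  shows "irreducible_pair B q0 q1 \<longleftrightarrow> irreducible_words (row B q0) (row B q1)"
proof -
  have q0: "bij_betw q0 B {1..card B}" and q1: "bij_betw q1 B {1..card B}"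
    using assms by (auto simp: is_pair_def)
  have "irreducible_pair B q0 q1 \<longleftrightarrow>
        irreducible_pair B (word_to_bij (row B q0)) (word_to_bij (row B q1))"
    using word_to_bij_row[OF q0] word_to_bij_row[OF q1] by (intro irreducible_pair_cong) auto
  also have "\<dots> \<longleftrightarrow> irreducible_words (row B q0) (row B q1)"
    using q0 q1 by (intro irreducible_pair_word_to_bij_iff) (auto simp: distinct_row set_row)
  finally show ?thesis .
qed

lemma set_butlast_distinct:
  assumes "distinct c" and "c \<noteq> []"
  shows "set (butlast c) = set c - {last c}"
proof -
  have "c = butlast c @ [last c]" using assms(2) by simp
  with assms(1) have "distinct (butlast c @ [last c])" by simp
  then show ?thesis
    by (subst (2) \<open>c = butlast c @ [last c]\<close>) auto
qed

lemma last_notin_set_take: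
  assumes "distinct c" and "k < length c"
  shows "last c \<notin> set (take k c)"
proof
  assume "last c \<in> set (take k c)"
  then obtain i where "i < k" and "i < length c" and "c ! i = last c"
    by (auto simp: in_set_conv_nth)
  moreover have "last c = c ! (length c - 1)"
    using assms(2) last_conv_nth[of c] by fastforce
  ultimately have "i = length c - 1"
    using assms by (simp add: nth_eq_iff_index_eq)
  with \<open>i < k\<close> assms(2) show False by simp
qed

lemma irreducible_words_last_neq:
  assumes "distinct c0" and "distinct c1" and "set c0 = set c1"
    and "2 \<le> length c0" and "irreducible_words c0 c1"
  shows "last c0 \<noteq> last c1"
proof
  assume last: "last c0 = last c1"
  have "length c1 = length c0"
    using assms(1-3) distinct_card by metis
  then have "take (length c0 - 1) c0 = butlast c0" and "take (length c0 - 1) c1 = butlast c1"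
    by (simp_all add: butlast_conv_take)
  moreover have "c0 \<noteq> []" and "c1 \<noteq> []" using assms(4) \<open>length c1 = length c0\<close> by auto
  ultimately have "set (take (length c0 - 1) c0) = set (take (length c0 - 1) c1)"
    using assms(1-3) last by (simp add: set_butlast_distinct)
  moreover have "0 < length c0 - 1" and "length c0 - 1 < length c0" using assms(4) by auto
  ultimately show False
    using assms(5) unfolding irreducible_words_def by blast
qed

lemma marked_block_in_set_take:
  assumes "marked_block X w x" and "length w \<le> k"
  shows "x \<in> set (take k (w @ r))"
  using assms by (auto simp: marked_block_def)

lemma last_concat_marked_blocks:
  assumes "xs \<noteq> []" and "\<forall>x\<in>set xs. marked_block X (W x) x"
  shows "last (concat (map W xs)) = last xs"
proof -
  obtain u where "W (last xs) = u @ [last xs]"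
    using assms last_in_set unfolding marked_block_def by blast
  moreover have "concat (map W xs) = concat (map W (butlast xs @ [last xs]))"
    using assms(1) by simp
  ultimately show ?thesis by simp
qed

lemma prefix_without_marks_in_first_block:
  assumes "marked_block X w x" and "x \<in> X"
    and "set (take k (w @ r)) \<inter> X = {}"
  shows "k < length w" and "take k (w @ r) = take k w"
proof -
  show "k < length w"
    using assms marked_block_in_set_take[OF assms(1)] by (meson disjoint_iff not_le)
  then show "take k (w @ r) = take k w" by simp
qed

lemma set_take_concat_marked_blocks:
  assumes "\<forall>x\<in>set xs. marked_block X (W x) x" and "set xs \<subseteq> X"
  shows "\<exists>j\<le>length xs. set (take k (concat (map W xs))) \<inter> X = set (take j xs)"
  using assms
proof (induction xs arbitrary: k)
  case Nil
  then show ?case by simp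
next
  case (Cons x xs)
  then obtain u where u: "W x = u @ [x]" "set u \<inter> X = {}" and "x \<in> X"
    by (auto simp: marked_block_def)
  show ?case
  proof (cases "k < length (W x)")
    case True
    then have "take k (concat (map W (x # xs))) = take k u"
      using u(1) by simp
    then have "set (take k (concat (map W (x # xs)))) \<subseteq> set u"
      by (metis set_take_subset)
    with u(2) show ?thesis by (intro exI[of _ 0]) auto
  next
    case False
    obtain j where "j \<le> length xs"
      and j: "set (take (k - length (W x)) (concat (map W xs))) \<inter> X = set (take j xs)"
      using Cons.IH[of "k - length (W x)"] Cons.prems by auto
    have "take k (concat (map W (x # xs))) = W x @ take (k - length (W x)) (concat (map W xs))"
      using False by simp
    moreover have "set (W x) \<inter> X = {x}" using u \<open>x \<in> X\<close> by auto
    ultimately have "set (take k (concat (map W (x # xs)))) \<inter> X = set (take (Suc j) (x # xs))"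
      using j by (simp add: Int_Un_distrib2)
    with \<open>j \<le> length xs\<close> show ?thesis by (intro exI[of _ "Suc j"]) simp
  qed
qed

lemma distinct_concat_prefix_ext:
  assumes "prefix_ext_side A A' w" and "distinct xs" and "set xs = A'"
  shows "distinct (concat (map w xs))"
proof (rule distinct_concat)
  have "w b \<noteq> w c" if "b \<in> A'" "c \<in> A'" "b \<noteq> c" for b c
    using assms(1) that unfolding prefix_ext_side_def by fastforce
  then show "distinct (map w xs)"
    using assms(2,3) by (auto simp: distinct_map inj_on_def)
  show "distinct ys" if "ys \<in> set (map w xs)" for ys
    using assms that unfolding prefix_ext_side_def by auto
  show "set ys \<inter> set zs = {}"
    if ys: "ys \<in> set (map w xs)" and zs: "zs \<in> set (map w xs)" and "ys \<noteq> zs" for ys zs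
  proof -
    obtain b c where "b \<in> A'" "c \<in> A'" "ys = w b" "zs = w c" using ys zs assms(3) by auto
    moreover have "b \<noteq> c" using \<open>ys \<noteq> zs\<close> \<open>ys = w b\<close> \<open>zs = w c\<close> by auto
    ultimately show ?thesis using assms(1) unfolding prefix_ext_side_def by blast
  qed
qed

lemma set_concat_prefix_ext:
  assumes "prefix_ext_side A A' w" and "A' \<subseteq> A" and "set xs = A'"
  shows "set (concat (map w xs)) = A"
  using assms unfolding prefix_ext_side_def by fastforce

lemma marked_block_prefix_ext:
  assumes "prefix_ext_side A A' w" and "b \<in> A'"
  shows "marked_block A' (w b) b"
  using assms unfolding prefix_ext_side_def marked_block_def by blast

text \<open>\<open>x0 # xs\<close> and \<open>y0 # ys\<close> play the rows of \<open>p\<close> on \<open>X = \<A>'\<close>, and \<open>c0\<close>, \<open>c1\<close> below the rows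
  of \<open>\<Omega>(p)\<close>; the assumption \<open>proper\<close> is \<open>\<A>' \<subset> \<A>\<close>.\<close>
locale marked_substitution =
  fixes X :: "'a set" and x0 y0 :: 'a and xs ys :: "'a list" and W0 W1 :: "'a \<Rightarrow> 'a list"
  assumes distinct_rows: "distinct (x0 # xs)" "distinct (y0 # ys)"
    and set_rows: "set (x0 # xs) = X" "set (y0 # ys) = X"
    and marked0: "\<forall>x\<in>X. marked_block X (W0 x) x"
    and marked1: "\<forall>x\<in>X. marked_block X (W1 x) x"
    and distinct_words: "distinct (concat (map W0 (x0 # xs)))" "distinct (concat (map W1 (y0 # ys)))"
    and set_words: "set (concat (map W1 (y0 # ys))) = set (concat (map W0 (x0 # xs)))"
    and proper: "X \<subset> set (concat (map W0 (x0 # xs)))"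
begin

abbreviation "c0 \<equiv> concat (map W0 (x0 # xs))"
abbreviation "c1 \<equiv> concat (map W1 (y0 # ys))"

lemma length_words: "length c1 = length c0"
  using distinct_card[OF distinct_words(1)] distinct_card[OF distinct_words(2)] set_words
  by simp

lemma two_le_length_word: "2 \<le> length c0"
proof -
  have "card X < card (set c0)"
    using proper by (intro psubset_card_mono) auto
  moreover have "card X = length (x0 # xs)"
    using distinct_card[OF distinct_rows(1)] set_rows(1) by simp
  ultimately show ?thesis using distinct_card[OF distinct_words(1)] by simp
qed

lemma common_first_prefix_imp_reducible:
  assumes "0 < k" "k \<le> length (W0 x0)" "k \<le> length (W1 y0)"
    and "set (take k (W0 x0)) = set (take k (W1 y0))"
  shows "\<not> irreducible_words c0 c1"
proof
  assume irr: "irreducible_words c0 c1"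
  have t0: "take k c0 = take k (W0 x0)" and t1: "take k c1 = take k (W1 y0)"
    using assms by auto
  have "\<not> k < length c0"
    using irr assms t0 t1 unfolding irreducible_words_def by auto
  moreover have "length (W0 x0) \<le> length c0" and "length (W1 y0) \<le> length c1" by simp_all
  ultimately have "k = length c0" "k = length c1" "k = length (W0 x0)" "k = length (W1 y0)"
    using assms(2,3) length_words by linarith+
  then have "c0 = W0 x0" and "c1 = W1 y0"
    using t0 t1 by (metis take_all order_refl)+
  have m0: "marked_block X (W0 x0) x0" and m1: "marked_block X (W1 y0) y0"
    using marked0 marked1 set_rows by auto
  then have "x0 \<in> set (W1 y0)"
    using set_words \<open>c0 = W0 x0\<close> \<open>c1 = W1 y0\<close> by (auto simp: marked_block_def)
  then have "x0 = y0"
    using m1 set_rows by (auto simp: marked_block_def)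
  then have "last c0 = last c1"
    using m0 m1 \<open>c0 = W0 x0\<close> \<open>c1 = W1 y0\<close> by (auto simp: marked_block_def)
  with irreducible_words_last_neq[OF distinct_words set_words[symmetric] two_le_length_word irr]
  show False ..
qed

lemma irreducible_words_concat:
  assumes irr: "irreducible_words (x0 # xs) (y0 # ys)"
    and no_common_prefix: "\<not> (\<exists>k>0. k \<le> length (W0 x0) \<and> k \<le> length (W1 y0) \<and>
                                  set (take k (W0 x0)) = set (take k (W1 y0)))"
  shows "irreducible_words c0 c1"
  unfolding irreducible_words_def
proof (intro allI impI notI)
  fix k assume k: "0 < k \<and> k < length c0" and eq: "set (take k c0) = set (take k c1)"
  have blocks: "\<forall>x\<in>set (x0 # xs). marked_block X (W0 x) x" "\<forall>x\<in>set (y0 # ys). marked_block X (W1 x) x"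
    using marked0 marked1 set_rows by simp_all
  obtain j0 where "j0 \<le> length (x0 # xs)" and j0: "set (take k c0) \<inter> X = set (take j0 (x0 # xs))"
    using set_take_concat_marked_blocks[OF blocks(1) equalityD1[OF set_rows(1)], of k] by blast
  obtain j1 where "j1 \<le> length (y0 # ys)" and j1: "set (take k c1) \<inter> X = set (take j1 (y0 # ys))"
    using set_take_concat_marked_blocks[OF blocks(2) equalityD1[OF set_rows(2)], of k] by blast
  have "card (set (take j0 (x0 # xs))) = j0" and "card (set (take j1 (y0 # ys))) = j1"
    using distinct_card[OF distinct_take[OF distinct_rows(1)], of j0]
      distinct_card[OF distinct_take[OF distinct_rows(2)], of j1]
      \<open>j0 \<le> length (x0 # xs)\<close> \<open>j1 \<le> length (y0 # ys)\<close> by simp_all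
  then have "j0 = j1" using j0 j1 eq by simp
  with j0 j1 eq have same_marks: "set (take j0 (x0 # xs)) = set (take j0 (y0 # ys))" by simp
  consider "j0 = 0" | "0 < j0" "j0 < length (x0 # xs)" | "j0 = length (x0 # xs)"
    using \<open>j0 \<le> length (x0 # xs)\<close> by linarith
  then show False
  proof cases
    case 1
    have marked: "marked_block X (W0 x0) x0" "x0 \<in> X" "marked_block X (W1 y0) y0" "y0 \<in> X"
      using blocks set_rows by auto
    have "set (take k (W0 x0 @ concat (map W0 xs))) \<inter> X = {}"
      and "set (take k (W1 y0 @ concat (map W1 ys))) \<inter> X = {}"
      using j0 j1 \<open>j0 = j1\<close> 1 by simp_all
    from prefix_without_marks_in_first_block[OF marked(1,2) this(1)]
      prefix_without_marks_in_first_block[OF marked(3,4) this(2)]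
    have "k \<le> length (W0 x0)" "k \<le> length (W1 y0)"
      and "set (take k (W0 x0)) = set (take k (W1 y0))"
      using eq by simp_all
    with no_common_prefix k show False by blast
  next
    case 2
    with irr same_marks show False
      unfolding irreducible_words_def by blast
  next
    case 3
    have "last c0 = last (x0 # xs)"
      by (rule last_concat_marked_blocks[OF _ blocks(1)]) simp
    also have "\<dots> \<in> set (take j0 (x0 # xs))"
      using 3 by simp
    finally have "last c0 \<in> set (take k c0)"
      using j0 by blast
    with last_notin_set_take[OF distinct_words(1)] k show False by blast
  qed
qed

lemma irreducible_words_concat_iff:
  assumes "irreducible_words (x0 # xs) (y0 # ys)"
  shows "irreducible_words c0 c1 \<longleftrightarrow>
         \<not> (\<exists>k>0. k \<le> length (W0 x0) \<and> k \<le> length (W1 y0) \<and>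
                 set (take k (W0 x0)) = set (take k (W1 y0)))"
  using common_first_prefix_imp_reducible irreducible_words_concat[OF assms] by blast

end

lemma marked_substitution_prefix_ext:
  assumes "prefix_ext_side A A' w0" and "prefix_ext_side A A' w1" and "A' \<subset> A"
    and "distinct (a0 # xs)" "distinct (a1 # ys)" and "set (a0 # xs) = A'" "set (a1 # ys) = A'"
  shows "marked_substitution A' a0 a1 xs ys w0 w1"
proof
  show "\<forall>x\<in>A'. marked_block A' (w0 x) x" "\<forall>x\<in>A'. marked_block A' (w1 x) x"
    using marked_block_prefix_ext[OF assms(1)] marked_block_prefix_ext[OF assms(2)] by blast+
  show "distinct (concat (map w0 (a0 # xs)))" "distinct (concat (map w1 (a1 # ys)))"
    using distinct_concat_prefix_ext[OF assms(1,4,6)] distinct_concat_prefix_ext[OF assms(2,5,7)] .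
  have "A' \<subseteq> A" using assms(3) by blast
  then have "set (concat (map w0 (a0 # xs))) = A" "set (concat (map w1 (a1 # ys))) = A"
    using set_concat_prefix_ext[OF assms(1) _ assms(6)] set_concat_prefix_ext[OF assms(2) _ assms(7)]
    by blast+
  then show "set (concat (map w1 (a1 # ys))) = set (concat (map w0 (a0 # xs)))"
    and "A' \<subset> set (concat (map w0 (a0 # xs)))"
    using assms(3) by simp_all
qed (fact assms)+

theorem lemma2p24:
  fixes A A' :: "'a set" and w0 w1 :: "'a \<Rightarrow> 'a list" and p0 p1 :: "'a \<Rightarrow> nat" and a0 a1 :: 'a
  assumes "finite A" and "A' \<subset> A"
    and "prefix_extension A A' w0 w1"
    and "irreducible_pair A' p0 p1"
    and "a0 = inv_into A' p0 1" and "a1 = inv_into A' p1 1"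
  shows "irreducible_pair A (Omega_side A' w0 p0) (Omega_side A' w1 p1) \<longleftrightarrow>
         \<not> (\<exists>k>0. k \<le> length (w0 a0) \<and> k \<le> length (w1 a1) \<and>
                 set (take k (w0 a0)) = set (take k (w1 a1)))"
proof -
  have pair: "is_pair A' p0 p1" and irr: "irreducible_pair A' p0 p1"
    using assms(4) unfolding irreducible_pair_def by auto
  then have bij0: "bij_betw p0 A' {1..card A'}" and bij1: "bij_betw p1 A' {1..card A'}"
    and "finite A'" by (auto simp: is_pair_def)
  have S0: "prefix_ext_side A A' w0" and S1: "prefix_ext_side A A' w1"
    using assms(3) unfolding prefix_extension_def by auto
  have "A' \<noteq> {}"
    using S0 assms(2) unfolding prefix_ext_side_def by auto
  with \<open>finite A'\<close> have "0 < card A'" by auto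
  define xs where "xs = tl (row A' p0)"
  define ys where "ys = tl (row A' p1)"
  have rows: "row A' p0 = a0 # xs" "row A' p1 = a1 # ys"
    unfolding xs_def ys_def assms(5,6) using \<open>0 < card A'\<close> by (rule row_eq_Cons)+
  have "set (a0 # xs) = A'" "set (a1 # ys) = A'"
    using set_row[OF bij0] set_row[OF bij1] unfolding rows .
  moreover have "distinct (a0 # xs)" "distinct (a1 # ys)"
    using distinct_row[OF bij0] distinct_row[OF bij1] unfolding rows .
  ultimately interpret marked_substitution A' a0 a1 xs ys w0 w1
    using S0 S1 assms(2) by (intro marked_substitution_prefix_ext)
  have "irreducible_pair A (Omega_side A' w0 p0) (Omega_side A' w1 p1) \<longleftrightarrow> irreducible_words c0 c1"
    unfolding Omega_side_def rows using distinct_words set_words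
      set_concat_prefix_ext[OF S0 psubset_imp_subset[OF assms(2)] set_rows(1)]
    by (intro irreducible_pair_word_to_bij_iff) simp_all
  also have "\<dots> \<longleftrightarrow> \<not> (\<exists>k>0. k \<le> length (w0 a0) \<and> k \<le> length (w1 a1) \<and>
                 set (take k (w0 a0)) = set (take k (w1 a1)))"
    using irr irreducible_pair_iff_rows[OF pair] rows by (intro irreducible_words_concat_iff) simp
  finally show ?thesis .
qed

end
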